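(* For integers $a\ge 1$ and $n\ge 2$, the modified fan graph $\overline{Fan}_n$ satisfies $$t(\overline{Fan}_n)=a\,B_{n-1}(a).$$ In particular, for $a=1$, $t(Fan_n)=F_{2n}$, where $F_k$ is the $k$-th Fibonacci number.
   Context: $t(H)$ is the number of spanning trees of $H$. The modified fan graph $\overline{Fan}_n$ is obtained from the path graph $P_n$ with vertices $p_1,\dots,p_n$ by adding a new vertex $p$ and joining $p$ to each vertex $p_j$ of $P_n$ by $a\ge 1$ parallel edges; for $a=1$ it is the fan graph $Fan_n$. The Morgan–Voyce polynomials are defined by $B_0(x)=1$, $B_1(x)=x+2$, $B_n(x)=(x+2)B_{n-1}(x)-B_{n-2}(x)$ for $n\ge2$. Fibonacci numbers: $F_1=F_2=1$, $F_k=F_{k-1}+F_{k-2}$. *)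

theory Defs
  imports Main "HOL-Number_Theory.Fib"
begin

text \<open>A finite undirected multigraph is given by a vertex set V, an edge set E
  (edge identifiers, so parallel edges are distinct elements of E) and a map
  ends assigning to each edge its two endpoints (in either order).\<close>

definition joins :: "('e \<Rightarrow> 'v \<times> 'v) \<Rightarrow> 'e \<Rightarrow> 'v \<Rightarrow> 'v \<Rightarrow> bool" where
  "joins ends e x y \<longleftrightarrow> ends e = (x, y) \<or> ends e = (y, x)"

text \<open>Loops are
  cycles of length 1, a pair of parallel edges is a cycle of length 2.\<close>
definition has_cycle :: "('e \<Rightarrow> 'v \<times> 'v) \<Rightarrow> 'e set \<Rightarrow> bool" where
  "has_cycle ends T \<longleftrightarrow>
     (\<exists>es vs. es \<noteq> [] \<and> set es \<subseteq> T \<and> distinct es \<and>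
        length vs = Suc (length es) \<and> hd vs = last vs \<and> distinct (tl vs) \<and>
        (\<forall>i < length es. joins ends (es ! i) (vs ! i) (vs ! Suc i)))"

definition adj_rel :: "('e \<Rightarrow> 'v \<times> 'v) \<Rightarrow> 'e set \<Rightarrow> ('v \<times> 'v) set" where
  "adj_rel ends T = {(x, y). \<exists>e\<in>T. joins ends e x y}"

definition connected_on :: "'v set \<Rightarrow> ('e \<Rightarrow> 'v \<times> 'v) \<Rightarrow> 'e set \<Rightarrow> bool" where
  "connected_on V ends T \<longleftrightarrow> (\<forall>u\<in>V. \<forall>v\<in>V. (u, v) \<in> (adj_rel ends T)\<^sup>*)"

definition is_spanning_tree ::
  "'v set \<Rightarrow> 'e set \<Rightarrow> ('e \<Rightarrow> 'v \<times> 'v) \<Rightarrow> 'e set \<Rightarrow> bool" where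
  "is_spanning_tree V E ends T \<longleftrightarrow>
     T \<subseteq> E \<and> connected_on V ends T \<and> \<not> has_cycle ends T"

definition num_spanning_trees :: "'v set \<Rightarrow> 'e set \<Rightarrow> ('e \<Rightarrow> 'v \<times> 'v) \<Rightarrow> nat" where
  "num_spanning_trees V E ends = card {T. is_spanning_tree V E ends T}"

text \<open>Vertex 0 is the apex p, vertex j (1 \<le> j \<le> n) is p_j.
  Edge Inl j (1 \<le> j < n) is the path edge p_j p_(j+1);
  edge Inr (j,k) (1 \<le> j \<le> n, 1 \<le> k \<le> a) is the k-th parallel edge p p_j.\<close>

definition mfan_verts :: "nat \<Rightarrow> nat set" where
  "mfan_verts n = {0..n}"

definition mfan_edges :: "nat \<Rightarrow> nat \<Rightarrow> (nat + nat \<times> nat) set" where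
  "mfan_edges a n = Inl ` {1..<n} \<union> Inr ` ({1..n} \<times> {1..a})"

fun mfan_ends :: "nat + nat \<times> nat \<Rightarrow> nat \<times> nat" where
  "mfan_ends (Inl j) = (j, Suc j)"
| "mfan_ends (Inr (j, k)) = (0, j)"

fun morgan_voyce_B :: "nat \<Rightarrow> 'a::comm_ring_1 \<Rightarrow> 'a" where
  "morgan_voyce_B 0 x = 1"
| "morgan_voyce_B (Suc 0) x = x + 2"
| "morgan_voyce_B (Suc (Suc n)) x =
     (x + 2) * morgan_voyce_B (Suc n) x - morgan_voyce_B n x"

end

theory Submission
  imports Defs
begin

text \<open>Sort the spanning trees of the fan on \<open>p, p\<^sub>1, \<dots>, p\<^sub>n\<^sub>+\<^sub>1\<close> by their edges at
  the new vertex \<open>p\<^sub>n\<^sub>+\<^sub>1\<close>. Either there is exactly one such edge (the path edge or one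
  of the \<open>a\<close> spokes), and removing it leaves a spanning tree of the smaller fan; or there
  are two, the path edge and one spoke, and removing both leaves a spanning forest of the
  smaller fan with two trees, one containing \<open>p\<close> and one containing \<open>p\<^sub>n\<close>. Sorting these
  forests in the same way gives \<open>t\<^sub>n\<^sub>+\<^sub>1 = (a + 1) t\<^sub>n + a f\<^sub>n\<close> and
  \<open>f\<^sub>n\<^sub>+\<^sub>1 = t\<^sub>n + f\<^sub>n\<close> with \<open>t\<^sub>1 = a\<close>, \<open>f\<^sub>1 = 1\<close>, whose solution is
  \<open>t\<^sub>n\<^sub>+\<^sub>1 = a B\<^sub>n(a)\<close>; finally \<open>B\<^sub>n(1) = F\<^sub>2\<^sub>n\<^sub>+\<^sub>2\<close>.\<close>

section \<open>Reachability and cycles in multigraphs\<close>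

abbreviation reachable :: "('e \<Rightarrow> 'v \<times> 'v) \<Rightarrow> 'e set \<Rightarrow> 'v \<Rightarrow> 'v \<Rightarrow> bool" where
  "reachable ends T x y \<equiv> (x, y) \<in> (adj_rel ends T)\<^sup>*"

lemma sym_adj_rel: "sym (adj_rel ends T)"
  unfolding adj_rel_def joins_def sym_def by auto

lemma reachable_sym: "reachable ends T x y \<Longrightarrow> reachable ends T y x"
  by (rule symD[OF sym_rtrancl[OF sym_adj_rel]])

lemma reachable_commute: "reachable ends T x y \<longleftrightarrow> reachable ends T y x"
  by (rule iffI; erule reachable_sym)

lemma adj_rel_mono: "S \<subseteq> T \<Longrightarrow> adj_rel ends S \<subseteq> adj_rel ends T"
  unfolding adj_rel_def by auto

lemma reachable_mono: "S \<subseteq> T \<Longrightarrow> reachable ends S x y \<Longrightarrow> reachable ends T x y"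
  using rtrancl_mono[OF adj_rel_mono] by blast

lemma reachable_edge: "e \<in> T \<Longrightarrow> joins ends e x y \<Longrightarrow> reachable ends T x y"
  by (rule r_into_rtrancl) (auto simp: adj_rel_def)

lemma reachable_ends: "e \<in> T \<Longrightarrow> reachable ends T (fst (ends e)) (snd (ends e))"
  by (rule reachable_edge) (auto simp: joins_def)

lemma reachable_ends_iff:
  assumes "joins ends e x y"
  shows "reachable ends T (fst (ends e)) (snd (ends e)) \<longleftrightarrow> reachable ends T x y"
  using assms reachable_commute[where ends = ends and T = T and x = x and y = y]
  unfolding joins_def by auto

definition walk :: "('e \<Rightarrow> 'v \<times> 'v) \<Rightarrow> 'v list \<Rightarrow> 'e list \<Rightarrow> bool" where
  "walk ends vs es \<longleftrightarrow>
     length vs = Suc (length es) \<and> (\<forall>i<length es. joins ends (es ! i) (vs ! i) (vs ! Suc i))"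

lemma walk_Cons: "walk ends (x # vs) (e # es) \<longleftrightarrow> joins ends e x (vs ! 0) \<and> walk ends vs es"
  unfolding walk_def by (auto simp: All_less_Suc2)

lemma walk_drop: "walk ends vs es \<Longrightarrow> i < length vs \<Longrightarrow> walk ends (drop i vs) (drop i es)"
  unfolding walk_def by auto

lemma has_cycle_iff_walk:
  "has_cycle ends T \<longleftrightarrow> (\<exists>es vs. es \<noteq> [] \<and> set es \<subseteq> T \<and> distinct es \<and> walk ends vs es \<and>
     hd vs = last vs \<and> distinct (tl vs))"
  unfolding has_cycle_def walk_def by meson

lemma reachable_along_walk:
  assumes "walk ends vs es" "set es \<subseteq> T" "j \<le> length es"
  shows "reachable ends T (vs ! 0) (vs ! j)"
  using assms(3)
proof (induction j)
  case (Suc j)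
  then have "joins ends (es ! j) (vs ! j) (vs ! Suc j)" "es ! j \<in> T"
    using assms(1,2) unfolding walk_def by auto
  then have "reachable ends T (vs ! j) (vs ! Suc j)" by (rule reachable_edge[rotated])
  with Suc show ?case by (meson Suc_leD rtrancl_trans)
qed simp

definition simple_path :: "('e \<Rightarrow> 'v \<times> 'v) \<Rightarrow> 'e set \<Rightarrow> 'v list \<Rightarrow> 'e list \<Rightarrow> bool" where
  "simple_path ends T vs es \<longleftrightarrow> walk ends vs es \<and> distinct vs \<and> distinct es \<and> set es \<subseteq> T"

lemma simple_path_Cons:
  assumes "simple_path ends T vs es" "e \<in> T" "joins ends e x (vs ! 0)" "x \<notin> set vs"
  shows "simple_path ends T (x # vs) (e # es)"
proof -
  have "e \<notin> set es"
  proof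
    assume "e \<in> set es"
    then obtain i where "i < length es" "es ! i = e" by (auto simp: in_set_conv_nth)
    then have "joins ends e (vs ! i) (vs ! Suc i)" "vs ! i \<in> set vs" "vs ! Suc i \<in> set vs"
      using assms(1) unfolding simple_path_def walk_def by auto
    then show False
      using assms(3,4) unfolding joins_def by auto
  qed
  then show ?thesis
    using assms unfolding simple_path_def by (simp add: walk_Cons)
qed

lemma reachable_imp_simple_path:
  assumes "reachable ends T x y"
  shows "\<exists>vs es. simple_path ends T vs es \<and> hd vs = x \<and> last vs = y"
  using assms
proof (induction rule: converse_rtrancl_induct)
  case base
  have "simple_path ends T [y] []" by (simp add: simple_path_def walk_def)
  then show ?case by fastforce
next
  case (step x z)
  then obtain vs es where p: "simple_path ends T vs es" "hd vs = z" "last vs = y" by blast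
  then have "vs \<noteq> []" unfolding simple_path_def walk_def by auto
  obtain e where e: "e \<in> T" "joins ends e x z" using step(1) unfolding adj_rel_def by auto
  show ?case
  proof (cases "x \<in> set vs")
    case True
    then obtain i where i: "i < length vs" "vs ! i = x" by (auto simp: in_set_conv_nth)
    have "simple_path ends T (drop i vs) (drop i es)"
      using p(1) i(1) unfolding simple_path_def by (auto simp: walk_drop dest: in_set_dropD)
    moreover have "hd (drop i vs) = x" "last (drop i vs) = y"
      using i p(3) by (simp_all add: hd_drop_conv_nth)
    ultimately show ?thesis by blast
  next
    case False
    have "simple_path ends T (x # vs) (e # es)"
      using simple_path_Cons[OF p(1) e(1)] e(2) p(2) \<open>vs \<noteq> []\<close> False by (simp add: hd_conv_nth)
    moreover have "last (x # vs) = y" using p(3) \<open>vs \<noteq> []\<close> by simp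
    ultimately show ?thesis by (metis list.sel(1))
  qed
qed

lemma has_cycle_imp_reachable_without_edge:
  assumes "has_cycle ends T"
  shows "\<exists>g\<in>T. reachable ends (T - {g}) (fst (ends g)) (snd (ends g))"
proof -
  obtain es vs where c: "es \<noteq> []" "set es \<subseteq> T" "distinct es" "walk ends vs es" "hd vs = last vs"
    using assms unfolding has_cycle_iff_walk by blast
  obtain g es' where es: "es = g # es'" using c(1) by (cases es) auto
  obtain v vs' where vs: "vs = v # vs'" using c(4) unfolding walk_def by (cases vs) auto
  have g: "joins ends g v (vs' ! 0)" and walk: "walk ends vs' es'"
    using c(4) unfolding es vs walk_Cons by auto
  have "set es' \<subseteq> T - {g}" using c(2,3) unfolding es by auto
  then have "reachable ends (T - {g}) (vs' ! 0) (vs' ! length es')"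
    using reachable_along_walk[OF walk] by blast
  moreover have "vs' ! length es' = v"
    using walk c(5) unfolding es vs walk_def by (auto simp: last_conv_nth split: if_splits)
  ultimately have "reachable ends (T - {g}) (vs' ! 0) v" by simp
  then have "reachable ends (T - {g}) v (vs' ! 0)" by (rule reachable_sym)
  then have "reachable ends (T - {g}) (fst (ends g)) (snd (ends g))"
    using reachable_ends_iff[OF g] by blast
  then show ?thesis using c(2) unfolding es by auto
qed

lemma reachable_without_edge_imp_has_cycle:
  assumes "g \<in> T" "reachable ends (T - {g}) (fst (ends g)) (snd (ends g))"
  shows "has_cycle ends T"
proof -
  obtain vs es where p: "simple_path ends (T - {g}) vs es"
      "hd vs = snd (ends g)" "last vs = fst (ends g)"
    using reachable_imp_simple_path[OF reachable_sym[OF assms(2)]] by blast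
  then have "vs \<noteq> []" unfolding simple_path_def walk_def by auto
  then have "joins ends g (fst (ends g)) (vs ! 0)"
    using p(2) by (simp add: joins_def hd_conv_nth)
  then have "walk ends (fst (ends g) # vs) (g # es)"
    using p(1) unfolding simple_path_def by (simp add: walk_Cons)
  moreover have "set (g # es) \<subseteq> T" "distinct (g # es)" "distinct vs"
    using p(1) assms(1) unfolding simple_path_def by auto
  moreover have "hd (fst (ends g) # vs) = last (fst (ends g) # vs)"
    using p(3) \<open>vs \<noteq> []\<close> by simp
  ultimately show ?thesis
    unfolding has_cycle_iff_walk by (intro exI[of _ "g # es"] exI[of _ "fst (ends g) # vs"]) simp
qed

lemma has_cycle_iff_reachable_without_edge:
  "has_cycle ends T \<longleftrightarrow> (\<exists>g\<in>T. reachable ends (T - {g}) (fst (ends g)) (snd (ends g)))"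
  using has_cycle_imp_reachable_without_edge reachable_without_edge_imp_has_cycle by metis

lemma not_has_cycle_empty: "\<not> has_cycle ends {}"
  unfolding has_cycle_def by auto

lemma has_cycle_mono: "S \<subseteq> T \<Longrightarrow> has_cycle ends S \<Longrightarrow> has_cycle ends T"
  unfolding has_cycle_def by blast

lemma has_cycle_parallel_edges:
  assumes "e \<in> T" "e' \<in> T" "e \<noteq> e'" "joins ends e x y" "joins ends e' x y"
  shows "has_cycle ends T"
proof -
  have "reachable ends (T - {e}) x y"
    using assms(2,3,5) by (intro reachable_edge[of e']) auto
  then have "reachable ends (T - {e}) (fst (ends e)) (snd (ends e))"
    using reachable_ends_iff[OF assms(4)] by blast
  then show ?thesis
    using assms(1) unfolding has_cycle_iff_reachable_without_edge by blast
qed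

lemma reachable_insert_edge:
  assumes "reachable ends (insert e S) p q" "joins ends e x y"
  shows "reachable ends S p q \<or> (reachable ends S p x \<and> reachable ends S y q)
    \<or> (reachable ends S p y \<and> reachable ends S x q)"
  using assms(1)
proof (induction rule: rtrancl_induct)
  case (step r q)
  then obtain f where f: "f \<in> insert e S" "joins ends f r q" unfolding adj_rel_def by auto
  show ?case
  proof (cases "f \<in> S")
    case True
    then have "(r, q) \<in> adj_rel ends S" using f(2) unfolding adj_rel_def by auto
    then show ?thesis using step.IH by (meson rtrancl_into_rtrancl)
  next
    case False
    then have "(r = x \<and> q = y) \<or> (r = y \<and> q = x)"
      using f assms(2) unfolding joins_def by auto
    then show ?thesis using step.IH by auto
  qed
qed simp

lemma reachable_if_has_cycle_insert:
  assumes "\<not> has_cycle ends T" "joins ends e x y" "has_cycle ends (insert e T)"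
  shows "reachable ends T x y"
proof -
  obtain g where g: "g \<in> insert e T"
      "reachable ends (insert e T - {g}) (fst (ends g)) (snd (ends g))"
    using assms(3) unfolding has_cycle_iff_reachable_without_edge by blast
  show ?thesis
  proof (cases "g = e")
    case True
    from g(2) True have "reachable ends (insert e T - {e}) (fst (ends e)) (snd (ends e))" by simp
    then have "reachable ends T (fst (ends e)) (snd (ends e))"
      by (rule reachable_mono[rotated]) blast
    then show ?thesis using reachable_ends_iff[OF assms(2)] by blast
  next
    case False
    let ?p = "fst (ends g)" and ?q = "snd (ends g)"
    have "g \<in> T" "insert e T - {g} = insert e (T - {g})" using g(1) False by auto
    have "\<not> reachable ends (T - {g}) ?p ?q"
      using assms(1) \<open>g \<in> T\<close> unfolding has_cycle_iff_reachable_without_edge by blast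
    then consider "reachable ends (T - {g}) ?p x" "reachable ends (T - {g}) y ?q"
      | "reachable ends (T - {g}) ?p y" "reachable ends (T - {g}) x ?q"
      using reachable_insert_edge[OF _ assms(2)] g(2) \<open>insert e T - {g} = _\<close> by metis
    then show ?thesis
    proof cases
      case 1
      then have "reachable ends T x ?p" "reachable ends T ?q y"
        by (auto intro: reachable_sym reachable_mono[of "T - {g}"])
      then show ?thesis
        using reachable_ends[OF \<open>g \<in> T\<close>] by (meson rtrancl_trans)
    next
      case 2
      then have "reachable ends T y ?p" "reachable ends T ?q x"
        by (auto intro: reachable_sym reachable_mono[of "T - {g}"])
      then have "reachable ends T y x"
        using reachable_ends[OF \<open>g \<in> T\<close>] by (meson rtrancl_trans)
      then show ?thesis by (rule reachable_sym)
    qed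
  qed
qed

lemma has_cycle_insert_iff:
  assumes "\<not> has_cycle ends T" "e \<notin> T" "joins ends e x y"
  shows "has_cycle ends (insert e T) \<longleftrightarrow> reachable ends T x y"
proof
  assume "reachable ends T x y"
  then have "reachable ends (insert e T - {e}) (fst (ends e)) (snd (ends e))"
    using reachable_ends_iff[OF assms(3)] assms(2) by simp
  then show "has_cycle ends (insert e T)"
    unfolding has_cycle_iff_reachable_without_edge by blast
qed (rule reachable_if_has_cycle_insert[OF assms(1,3)])

definition isolated :: "('e \<Rightarrow> 'v \<times> 'v) \<Rightarrow> 'e set \<Rightarrow> 'v \<Rightarrow> bool" where
  "isolated ends S v \<longleftrightarrow> (\<forall>e\<in>S. fst (ends e) \<noteq> v \<and> snd (ends e) \<noteq> v)"

lemma reachable_isolated: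
  assumes "isolated ends S v" "reachable ends S x y"
  shows "x = v \<longleftrightarrow> y = v"
  using assms(2)
proof (induction rule: rtrancl_induct)
  case (step y z)
  then obtain e where "e \<in> S" "joins ends e y z" unfolding adj_rel_def by blast
  then have "y \<noteq> v" "z \<noteq> v" using assms(1) unfolding isolated_def joins_def by auto
  then show ?case using step.IH by simp
qed simp

lemma reachable_insert_pendant:
  assumes "isolated ends S v" "joins ends e u v" "x \<noteq> v"
  shows "reachable ends (insert e S) x y \<longleftrightarrow>
    (if y = v then reachable ends S x u else reachable ends S x y)"
proof
  assume r: "reachable ends (insert e S) x y"
  have x: "\<not> reachable ends S x v" using reachable_isolated[OF assms(1), of x v] assms(3) by blast
  show "if y = v then reachable ends S x u else reachable ends S x y"
  proof (cases "y = v")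
    case True
    then show ?thesis using reachable_insert_edge[OF r assms(2)] x by auto
  next
    case False
    then have "\<not> reachable ends S v y" using reachable_isolated[OF assms(1), of v y] by blast
    then show ?thesis using reachable_insert_edge[OF r assms(2)] x False by auto
  qed
next
  assume r: "if y = v then reachable ends S x u else reachable ends S x y"
  show "reachable ends (insert e S) x y"
  proof (cases "y = v")
    case True
    have "reachable ends (insert e S) x u"
      using r True reachable_mono[OF subset_insertI] by simp
    moreover have "reachable ends (insert e S) u v" by (rule reachable_edge[OF insertI1 assms(2)])
    ultimately have "reachable ends (insert e S) x v" by (rule rtrancl_trans)
    then show ?thesis using True by simp
  next
    case False
    then show ?thesis using r reachable_mono[OF subset_insertI] by simp
  qed
qed

lemma has_cycle_insert_pendant_iff:
  assumes "isolated ends S v" "joins ends e u v" "u \<noteq> v"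
  shows "has_cycle ends (insert e S) \<longleftrightarrow> has_cycle ends S"
proof -
  have "e \<notin> S" using assms(1,2) unfolding isolated_def joins_def by auto
  have "\<not> reachable ends S u v" using reachable_isolated[OF assms(1), of u v] assms(3) by blast
  show ?thesis
  proof
    assume "has_cycle ends (insert e S)"
    then show "has_cycle ends S"
      using has_cycle_insert_iff[OF _ \<open>e \<notin> S\<close> assms(2)] \<open>\<not> reachable ends S u v\<close> by blast
  qed (rule has_cycle_mono[OF subset_insertI])
qed

lemma connected_on_iff_reachable_from:
  assumes "r \<in> V"
  shows "connected_on V ends T \<longleftrightarrow> (\<forall>z\<in>V. reachable ends T r z)"
proof
  assume from_r: "\<forall>z\<in>V. reachable ends T r z"
  have "reachable ends T u v" if "u \<in> V" "v \<in> V" for u v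
  proof -
    have "reachable ends T r u" using from_r that(1) by blast
    then have "reachable ends T u r" by (rule reachable_sym)
    then show ?thesis by (rule rtrancl_trans) (use from_r that(2) in blast)
  qed
  then show "connected_on V ends T" unfolding connected_on_def by blast
qed (use assms in \<open>simp add: connected_on_def\<close>)

lemma card_Un_Times_disjoint:
  assumes "finite A" "finite B" "finite X" "finite Y" "A \<inter> B = {}"
  shows "card (A \<times> X \<union> B \<times> Y) = card A * card X + card B * card Y"
  using assms by (subst card_Un_disjoint) (auto simp: card_cartesian_product)

lemma card_eq_card_split:
  assumes "\<And>T. T \<in> X \<Longrightarrow> (T - E, T \<inter> E) \<in> P"
    and "\<And>N F. (N, F) \<in> P \<Longrightarrow> N \<inter> E = {} \<and> F \<subseteq> E \<and> N \<union> F \<in> X"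
  shows "card X = card P"
proof -
  have "bij_betw (\<lambda>T. (T - E, T \<inter> E)) X P"
  proof (rule bij_betw_byWitness[where f' = "\<lambda>(N, F). N \<union> F"])
    show "\<forall>p\<in>P. ((\<lambda>(N, F). N \<union> F) p - E, (\<lambda>(N, F). N \<union> F) p \<inter> E) = p"
      using assms(2) by auto
  qed (use assms(1,2) in auto)
  then show ?thesis by (rule bij_betw_same_card)
qed

section \<open>Spanning trees and two-tree spanning forests of the modified fan\<close>

definition fan_trees :: "nat \<Rightarrow> nat \<Rightarrow> (nat + nat \<times> nat) set set" where
  "fan_trees a n = {T. is_spanning_tree (mfan_verts n) (mfan_edges a n) mfan_ends T}"

definition fan_forests :: "nat \<Rightarrow> nat \<Rightarrow> (nat + nat \<times> nat) set set" where
  "fan_forests a n = {F. F \<subseteq> mfan_edges a n \<and> \<not> has_cycle mfan_ends F \<and>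
     (\<forall>z\<le>n. reachable mfan_ends F 0 z \<or> reachable mfan_ends F n z) \<and>
     \<not> reachable mfan_ends F 0 n}"

definition mfan_spokes :: "nat \<Rightarrow> nat \<Rightarrow> (nat + nat \<times> nat) set" where
  "mfan_spokes a j = (\<lambda>k. Inr (j, k)) ` {1..a}"

lemma fan_trees_iff:
  "T \<in> fan_trees a n \<longleftrightarrow>
     T \<subseteq> mfan_edges a n \<and> \<not> has_cycle mfan_ends T \<and> (\<forall>z\<le>n. reachable mfan_ends T 0 z)"
  using connected_on_iff_reachable_from[of 0 "{0..n}" mfan_ends T]
  unfolding fan_trees_def is_spanning_tree_def mfan_verts_def by auto

lemma mfan_edges_Suc:
  "1 \<le> n \<Longrightarrow> mfan_edges a (Suc n) = insert (Inl n) (mfan_edges a n \<union> mfan_spokes a (Suc n))"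
  unfolding mfan_edges_def mfan_spokes_def by (auto simp: less_Suc_eq le_Suc_eq)

lemma mfan_edges_1: "mfan_edges a (Suc 0) = mfan_spokes a (Suc 0)"
  unfolding mfan_edges_def mfan_spokes_def by auto

lemma mfan_edges_mono: "mfan_edges a n \<subseteq> mfan_edges a (Suc n)"
  unfolding mfan_edges_def by auto

lemma mfan_edges_Suc_diff:
  "mfan_edges a (Suc n) - mfan_edges a n \<subseteq> insert (Inl n) (mfan_spokes a (Suc n))"
  unfolding mfan_edges_def mfan_spokes_def by (auto simp: less_Suc_eq le_Suc_eq)

lemma Inl_notin_mfan_edges: "Inl n \<notin> mfan_edges a n"
  unfolding mfan_edges_def by auto

lemma Inl_notin_mfan_spokes: "Inl n \<notin> mfan_spokes a j"
  unfolding mfan_spokes_def by auto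

lemma mfan_spokes_Int_mfan_edges: "mfan_spokes a (Suc n) \<inter> mfan_edges a n = {}"
  unfolding mfan_edges_def mfan_spokes_def by auto

lemma mfan_edges_Suc_diff_eq:
  "1 \<le> n \<Longrightarrow> mfan_edges a (Suc n) - mfan_edges a n = insert (Inl n) (mfan_spokes a (Suc n))"
  using mfan_edges_Suc mfan_spokes_Int_mfan_edges Inl_notin_mfan_edges by blast

lemma card_mfan_spokes: "card (mfan_spokes a j) = a"
  unfolding mfan_spokes_def by (simp add: card_image inj_on_def)

lemma finite_mfan_spokes: "finite (mfan_spokes a j)"
  unfolding mfan_spokes_def by simp

lemma joins_Inl: "joins mfan_ends (Inl n) n (Suc n)"
  unfolding joins_def by simp

lemma joins_spoke: "s \<in> mfan_spokes a j \<Longrightarrow> joins mfan_ends s 0 j"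
  unfolding mfan_spokes_def joins_def by auto

lemma mfan_edges_Suc_diff_joins:
  assumes "e \<in> mfan_edges a (Suc n) - mfan_edges a n"
  obtains u where "u \<le> n" "joins mfan_ends e u (Suc n)"
  using assms mfan_edges_Suc_diff joins_Inl joins_spoke by blast

lemma isolated_mfan_edges: "F \<subseteq> mfan_edges a n \<Longrightarrow> isolated mfan_ends F (Suc n)"
  unfolding isolated_def mfan_edges_def by fastforce

lemma finite_fan_trees: "finite (fan_trees a n)"
proof (rule finite_subset)
  show "fan_trees a n \<subseteq> Pow (mfan_edges a n)" by (auto simp: fan_trees_iff)
qed (simp add: mfan_edges_def)

lemma finite_fan_forests: "finite (fan_forests a n)"
proof (rule finite_subset)
  show "fan_forests a n \<subseteq> Pow (mfan_edges a n)" by (auto simp: fan_forests_def)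
qed (simp add: mfan_edges_def)

lemma fan_trees_insert_pendant_iff:
  assumes "F \<subseteq> mfan_edges a n" "e \<in> mfan_edges a (Suc n)" "joins mfan_ends e u (Suc n)" "u \<le> n"
  shows "insert e F \<in> fan_trees a (Suc n) \<longleftrightarrow> F \<in> fan_trees a n"
proof -
  have iso: "isolated mfan_ends F (Suc n)" using assms(1) by (rule isolated_mfan_edges)
  have "has_cycle mfan_ends (insert e F) \<longleftrightarrow> has_cycle mfan_ends F"
    using has_cycle_insert_pendant_iff[OF iso assms(3)] assms(4) by simp
  moreover have "(\<forall>z\<le>Suc n. reachable mfan_ends (insert e F) 0 z) \<longleftrightarrow>
      (\<forall>z\<le>n. reachable mfan_ends F 0 z)"
    using reachable_insert_pendant[OF iso assms(3), of 0] assms(4) by (auto simp: le_Suc_eq)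
  moreover have "insert e F \<subseteq> mfan_edges a (Suc n)"
    using assms(1,2) mfan_edges_mono by blast
  ultimately show ?thesis using assms(1) unfolding fan_trees_iff by blast
qed

lemma fan_forests_Suc_iff:
  assumes "F \<subseteq> mfan_edges a n"
  shows "F \<in> fan_forests a (Suc n) \<longleftrightarrow> F \<in> fan_trees a n"
proof -
  have iso: "isolated mfan_ends F (Suc n)" using assms by (rule isolated_mfan_edges)
  have "reachable mfan_ends F (Suc n) z \<longleftrightarrow> z = Suc n" for z
    using reachable_isolated[OF iso, of "Suc n" z] by auto
  then have "(\<forall>z\<le>Suc n. reachable mfan_ends F 0 z \<or> reachable mfan_ends F (Suc n) z) \<longleftrightarrow>
      (\<forall>z\<le>n. reachable mfan_ends F 0 z)"
    by (auto simp: le_Suc_eq)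
  moreover have "\<not> reachable mfan_ends F 0 (Suc n)"
    using reachable_isolated[OF iso, of 0 "Suc n"] by auto
  ultimately show ?thesis
    using assms mfan_edges_mono unfolding fan_forests_def fan_trees_iff by blast
qed

lemma fan_forests_insert_path_iff:
  assumes "F \<subseteq> mfan_edges a n" "1 \<le> n"
  shows "insert (Inl n) F \<in> fan_forests a (Suc n) \<longleftrightarrow> F \<in> fan_forests a n"
proof -
  let ?F' = "insert (Inl n) F"
  have iso: "isolated mfan_ends F (Suc n)" using assms(1) by (rule isolated_mfan_edges)
  note pendant = reachable_insert_pendant[OF iso joins_Inl]
  have "has_cycle mfan_ends ?F' \<longleftrightarrow> has_cycle mfan_ends F"
    using has_cycle_insert_pendant_iff[OF iso joins_Inl] by simp
  moreover have "reachable mfan_ends ?F' 0 (Suc n) \<longleftrightarrow> reachable mfan_ends F 0 n"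
    using pendant[of 0 "Suc n"] by simp
  moreover have "reachable mfan_ends ?F' (Suc n) z \<longleftrightarrow> reachable mfan_ends F n z" if "z \<le> n" for z
    using pendant[of z "Suc n"] that
      reachable_commute[where T = ?F' and x = z and y = "Suc n"]
      reachable_commute[where T = F and x = z and y = n] by auto
  moreover have "reachable mfan_ends ?F' 0 z \<longleftrightarrow> reachable mfan_ends F 0 z" if "z \<le> n" for z
    using pendant[of 0 z] that by auto
  moreover have "?F' \<subseteq> mfan_edges a (Suc n)"
    using assms mfan_edges_Suc by blast
  ultimately show ?thesis
    using assms(1) unfolding fan_forests_def by (auto simp: le_Suc_eq)
qed

lemma has_cycle_insert_path_spoke_iff:
  assumes "F \<subseteq> mfan_edges a n" "s \<in> mfan_spokes a (Suc n)"
  shows "has_cycle mfan_ends (insert (Inl n) (insert s F)) \<longleftrightarrow>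
    has_cycle mfan_ends F \<or> reachable mfan_ends F 0 n"
proof -
  let ?S = "insert s F"
  have iso: "isolated mfan_ends F (Suc n)" using assms(1) by (rule isolated_mfan_edges)
  have s: "joins mfan_ends s 0 (Suc n)" using assms(2) by (rule joins_spoke)
  have "Inl n \<notin> ?S"
    using assms Inl_notin_mfan_edges unfolding mfan_spokes_def by auto
  have acyclic_S: "has_cycle mfan_ends ?S \<longleftrightarrow> has_cycle mfan_ends F"
    using has_cycle_insert_pendant_iff[OF iso s] by simp
  show ?thesis
  proof (cases "has_cycle mfan_ends F")
    case False
    then have "has_cycle mfan_ends (insert (Inl n) ?S) \<longleftrightarrow> reachable mfan_ends ?S n (Suc n)"
      using has_cycle_insert_iff[OF _ \<open>Inl n \<notin> ?S\<close> joins_Inl] acyclic_S by blast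
    also have "\<dots> \<longleftrightarrow> reachable mfan_ends F 0 n"
      using reachable_insert_pendant[OF iso s, of n "Suc n"]
        reachable_commute[where T = F and x = 0 and y = n] by simp
    finally show ?thesis using False by blast
  qed (use acyclic_S has_cycle_mono[of ?S "insert (Inl n) ?S"] in blast)
qed

lemma reachable_insert_path_spoke_iff:
  assumes "F \<subseteq> mfan_edges a n" "s \<in> mfan_spokes a (Suc n)"
  shows "(\<forall>z\<le>Suc n. reachable mfan_ends (insert (Inl n) (insert s F)) 0 z) \<longleftrightarrow>
    (\<forall>z\<le>n. reachable mfan_ends F 0 z \<or> reachable mfan_ends F n z)"
    (is "(\<forall>z\<le>Suc n. reachable _ ?T 0 z) \<longleftrightarrow> _")
proof
  let ?S = "insert s F"
  have iso: "isolated mfan_ends F (Suc n)" using assms(1) by (rule isolated_mfan_edges)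
  have s: "joins mfan_ends s 0 (Suc n)" using assms(2) by (rule joins_spoke)
  note pendant = reachable_insert_pendant[OF iso s]
  assume connected: "\<forall>z\<le>Suc n. reachable mfan_ends ?T 0 z"
  show "\<forall>z\<le>n. reachable mfan_ends F 0 z \<or> reachable mfan_ends F n z"
  proof (intro allI impI)
    fix z assume "z \<le> n"
    then have "reachable mfan_ends ?T 0 z" using connected by simp
    from reachable_insert_edge[OF this joins_Inl]
    consider "reachable mfan_ends ?S 0 z" | "reachable mfan_ends ?S (Suc n) z"
      | "reachable mfan_ends ?S n z"
      by blast
    then show "reachable mfan_ends F 0 z \<or> reachable mfan_ends F n z"
    proof cases
      case 2
      then have "reachable mfan_ends ?S z (Suc n)" by (rule reachable_sym)
      then have "reachable mfan_ends F z 0" using pendant[of z "Suc n"] \<open>z \<le> n\<close> by simp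
      then show ?thesis by (simp add: reachable_sym)
    qed (use pendant \<open>z \<le> n\<close> in auto)
  qed
next
  assume split: "\<forall>z\<le>n. reachable mfan_ends F 0 z \<or> reachable mfan_ends F n z"
  have "F \<subseteq> ?T" by blast
  have "reachable mfan_ends ?T 0 (Suc n)"
    using joins_spoke[OF assms(2)] by (intro reachable_edge[of s]) auto
  moreover have "reachable mfan_ends ?T (Suc n) n"
    using joins_Inl by (intro reachable_edge[of "Inl n"]) (auto simp: joins_def)
  ultimately have "reachable mfan_ends ?T 0 n" by (rule rtrancl_trans)
  then have "reachable mfan_ends ?T 0 z" if "z \<le> n" for z
    using split that reachable_mono[OF \<open>F \<subseteq> ?T\<close>, of 0 z]
      reachable_mono[OF \<open>F \<subseteq> ?T\<close>, of n z] rtrancl_trans by metis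
  then show "\<forall>z\<le>Suc n. reachable mfan_ends ?T 0 z"
    using \<open>reachable mfan_ends ?T 0 (Suc n)\<close> by (auto simp: le_Suc_eq)
qed

lemma fan_trees_insert_path_spoke_iff:
  assumes "F \<subseteq> mfan_edges a n" "1 \<le> n" "s \<in> mfan_spokes a (Suc n)"
  shows "insert (Inl n) (insert s F) \<in> fan_trees a (Suc n) \<longleftrightarrow> F \<in> fan_forests a n"
proof -
  have "insert (Inl n) (insert s F) \<subseteq> mfan_edges a (Suc n)"
    using assms mfan_edges_Suc by blast
  then show ?thesis
    using assms(1) has_cycle_insert_path_spoke_iff[OF assms(1,3)]
      reachable_insert_path_spoke_iff[OF assms(1,3)]
    unfolding fan_trees_iff fan_forests_def by blast
qed

lemma fan_trees_Suc_cases: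
  assumes "T \<in> fan_trees a (Suc n)"
  obtains e where "e \<in> mfan_edges a (Suc n) - mfan_edges a n" "T - mfan_edges a n = {e}"
    | s where "s \<in> mfan_spokes a (Suc n)" "T - mfan_edges a n = {Inl n, s}"
proof -
  let ?E = "mfan_edges a n" and ?Sp = "mfan_spokes a (Suc n)"
  have T: "T \<subseteq> mfan_edges a (Suc n)" "\<not> has_cycle mfan_ends T" "reachable mfan_ends T 0 (Suc n)"
    using assms unfolding fan_trees_iff by auto
  have new: "T - ?E \<subseteq> insert (Inl n) ?Sp" using T(1) mfan_edges_Suc_diff by blast
  have "T - ?E \<noteq> {}"
  proof
    assume "T - ?E = {}"
    then have "isolated mfan_ends T (Suc n)" by (intro isolated_mfan_edges) blast
    from reachable_isolated[OF this T(3)] show False by simp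
  qed
  have one_spoke: "s = s'" if "s \<in> T" "s' \<in> T" "s \<in> ?Sp" "s' \<in> ?Sp" for s s'
    using has_cycle_parallel_edges[OF that(1,2) _ joins_spoke[OF that(3)] joins_spoke[OF that(4)]] T(2)
    by blast
  show thesis
  proof (cases "Inl n \<in> T - ?E")
    case False
    then obtain s where "s \<in> ?Sp" "T - ?E = {s}"
      using new \<open>T - ?E \<noteq> {}\<close> one_spoke by blast
    then show thesis using that(1) T(1) by blast
  next
    case True
    show thesis
    proof (cases "T - ?E = {Inl n}")
      case True
      then show thesis using that(1) T(1) by blast
    next
      case False
      then obtain s where "s \<in> ?Sp" "T - ?E = {Inl n, s}"
        using new \<open>Inl n \<in> T - ?E\<close> one_spoke by blast
      then show thesis by (rule that(2))
    qed
  qed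
qed

lemma fan_forests_Suc_no_spoke:
  assumes "F \<in> fan_forests a (Suc n)"
  shows "F \<inter> mfan_spokes a (Suc n) = {}"
proof -
  have "\<not> reachable mfan_ends F 0 (Suc n)" using assms unfolding fan_forests_def by blast
  then show ?thesis using reachable_edge[OF _ joins_spoke, of _ F] by blast
qed

definition fan_tree_splits :: "nat \<Rightarrow> nat \<Rightarrow> ((nat + nat \<times> nat) set \<times> (nat + nat \<times> nat) set) set"
  where "fan_tree_splits a n =
    (\<lambda>e. {e}) ` insert (Inl n) (mfan_spokes a (Suc n)) \<times> fan_trees a n \<union>
    (\<lambda>s. {Inl n, s}) ` mfan_spokes a (Suc n) \<times> fan_forests a n"

definition fan_forest_splits :: "nat \<Rightarrow> nat \<Rightarrow> ((nat + nat \<times> nat) set \<times> (nat + nat \<times> nat) set) set"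
  where "fan_forest_splits a n = {{}} \<times> fan_trees a n \<union> {{Inl n}} \<times> fan_forests a n"

lemma card_fan_tree_splits:
  "card (fan_tree_splits a n) = Suc a * card (fan_trees a n) + a * card (fan_forests a n)"
proof -
  let ?Sp = "mfan_spokes a (Suc n)"
  have "card ((\<lambda>e. {e}) ` insert (Inl n) ?Sp) = Suc a"
    by (subst card_image) (simp_all add: finite_mfan_spokes Inl_notin_mfan_spokes card_mfan_spokes)
  moreover have "card ((\<lambda>s. {Inl n, s}) ` ?Sp) = a"
    using Inl_notin_mfan_spokes
    by (subst card_image) (auto simp: inj_on_def doubleton_eq_iff card_mfan_spokes)
  moreover have "(\<lambda>e. {e}) ` insert (Inl n) ?Sp \<inter> (\<lambda>s. {Inl n, s}) ` ?Sp = {}"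
    using Inl_notin_mfan_spokes by (auto simp: doubleton_eq_iff)
  ultimately show ?thesis
    unfolding fan_tree_splits_def
    by (simp add: card_Un_Times_disjoint finite_fan_trees finite_fan_forests finite_mfan_spokes)
qed

lemma card_fan_forest_splits:
  "card (fan_forest_splits a n) = card (fan_trees a n) + card (fan_forests a n)"
  unfolding fan_forest_splits_def
  by (simp add: card_Un_Times_disjoint finite_fan_trees finite_fan_forests)

lemma fan_trees_Suc_split:
  assumes "1 \<le> n" "T \<in> fan_trees a (Suc n)"
  shows "(T - mfan_edges a n, T \<inter> mfan_edges a n) \<in> fan_tree_splits a n"
proof -
  let ?E = "mfan_edges a n"
  have F: "T \<inter> ?E \<subseteq> ?E" by blast
  from assms(2) show ?thesis
  proof (cases rule: fan_trees_Suc_cases)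
    case (1 e)
    obtain u where "u \<le> n" "joins mfan_ends e u (Suc n)"
      using mfan_edges_Suc_diff_joins[OF 1(1)] .
    moreover have "T = insert e (T \<inter> ?E)" using 1(2) by blast
    ultimately have "T \<inter> ?E \<in> fan_trees a n"
      using fan_trees_insert_pendant_iff[OF F] 1(1) assms(2) by (metis DiffD1)
    moreover have "{e} \<in> (\<lambda>e. {e}) ` insert (Inl n) (mfan_spokes a (Suc n))"
      using 1(1) mfan_edges_Suc_diff_eq[OF assms(1)] by blast
    ultimately show ?thesis using 1(2) unfolding fan_tree_splits_def by simp
  next
    case (2 s)
    then have "T = insert (Inl n) (insert s (T \<inter> ?E))" by blast
    then have "T \<inter> ?E \<in> fan_forests a n"
      using fan_trees_insert_path_spoke_iff[OF F assms(1) 2(1)] assms(2) by simp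
    moreover have "{Inl n, s} \<in> (\<lambda>s. {Inl n, s}) ` mfan_spokes a (Suc n)" using 2(1) by blast
    ultimately show ?thesis using 2(2) unfolding fan_tree_splits_def by simp
  qed
qed

lemma fan_tree_splits_join:
  assumes "1 \<le> n" "(N, F) \<in> fan_tree_splits a n"
  shows "N \<inter> mfan_edges a n = {} \<and> F \<subseteq> mfan_edges a n \<and> N \<union> F \<in> fan_trees a (Suc n)"
proof -
  let ?E = "mfan_edges a n" and ?Sp = "mfan_spokes a (Suc n)"
  note new = mfan_edges_Suc_diff_eq[OF assms(1)]
  consider e where "e \<in> insert (Inl n) ?Sp" "N = {e}" "F \<in> fan_trees a n"
    | s where "s \<in> ?Sp" "N = {Inl n, s}" "F \<in> fan_forests a n"
    using assms(2) unfolding fan_tree_splits_def by blast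
  then show ?thesis
  proof cases
    case (1 e)
    then have "e \<in> mfan_edges a (Suc n) - ?E" using new by blast
    moreover obtain u where "u \<le> n" "joins mfan_ends e u (Suc n)"
      using mfan_edges_Suc_diff_joins[OF calculation] .
    moreover have "F \<subseteq> ?E" using 1(3) unfolding fan_trees_iff by blast
    ultimately show ?thesis
      using 1 fan_trees_insert_pendant_iff[of F a n e] by auto
  next
    case (2 s)
    moreover have "F \<subseteq> ?E" using 2(3) unfolding fan_forests_def by blast
    ultimately show ?thesis
      using fan_trees_insert_path_spoke_iff[OF _ assms(1) 2(1)] new by auto
  qed
qed

lemma fan_forests_Suc_split:
  assumes "1 \<le> n" "F \<in> fan_forests a (Suc n)"
  shows "(F - mfan_edges a n, F \<inter> mfan_edges a n) \<in> fan_forest_splits a n"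
proof -
  let ?E = "mfan_edges a n"
  have "F - ?E \<subseteq> {Inl n}"
    using assms(2) fan_forests_Suc_no_spoke[OF assms(2)] mfan_edges_Suc_diff
    unfolding fan_forests_def by blast
  then consider "F - ?E = {}" | "F - ?E = {Inl n}" by blast
  then show ?thesis
  proof cases
    case 1
    then have "F \<subseteq> ?E" by blast
    then show ?thesis
      using assms(2) 1 fan_forests_Suc_iff unfolding fan_forest_splits_def by (simp add: Int_absorb2)
  next
    case 2
    then have "F = insert (Inl n) (F \<inter> ?E)" by blast
    then have "F \<inter> ?E \<in> fan_forests a n"
      using fan_forests_insert_path_iff[of "F \<inter> ?E" a n] assms by simp
    then show ?thesis using 2 unfolding fan_forest_splits_def by simp
  qed
qed

lemma fan_forest_splits_join:
  assumes "1 \<le> n" "(N, F) \<in> fan_forest_splits a n"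
  shows "N \<inter> mfan_edges a n = {} \<and> F \<subseteq> mfan_edges a n \<and> N \<union> F \<in> fan_forests a (Suc n)"
proof -
  consider "N = {}" "F \<in> fan_trees a n" | "N = {Inl n}" "F \<in> fan_forests a n"
    using assms(2) unfolding fan_forest_splits_def by blast
  then show ?thesis
  proof cases
    case 1
    moreover have "F \<subseteq> mfan_edges a n" using 1(2) unfolding fan_trees_iff by blast
    ultimately show ?thesis using fan_forests_Suc_iff by simp
  next
    case 2
    moreover have "F \<subseteq> mfan_edges a n" using 2(2) unfolding fan_forests_def by blast
    ultimately show ?thesis
      using fan_forests_insert_path_iff[OF _ assms(1)] Inl_notin_mfan_edges by simp
  qed
qed

lemma card_fan_trees_Suc:
  assumes "1 \<le> n"
  shows "card (fan_trees a (Suc n)) = Suc a * card (fan_trees a n) + a * card (fan_forests a n)"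
proof -
  have "card (fan_trees a (Suc n)) = card (fan_tree_splits a n)"
    by (rule card_eq_card_split[OF fan_trees_Suc_split[OF assms] fan_tree_splits_join[OF assms]])
  then show ?thesis by (simp add: card_fan_tree_splits)
qed

lemma card_fan_forests_Suc:
  assumes "1 \<le> n"
  shows "card (fan_forests a (Suc n)) = card (fan_trees a n) + card (fan_forests a n)"
proof -
  have "card (fan_forests a (Suc n)) = card (fan_forest_splits a n)"
    by (rule card_eq_card_split[OF fan_forests_Suc_split[OF assms] fan_forest_splits_join[OF assms]])
  then show ?thesis by (simp add: card_fan_forest_splits)
qed

lemma fan_trees_0: "fan_trees a 0 = {{}}"
  by (auto simp: fan_trees_iff mfan_edges_def not_has_cycle_empty)

lemma card_fan_trees_1: "card (fan_trees a (Suc 0)) = a"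
proof -
  have "fan_trees a (Suc 0) = (\<lambda>s. {s}) ` mfan_spokes a (Suc 0)"
  proof (intro equalityI subsetI)
    fix T assume T: "T \<in> fan_trees a (Suc 0)"
    then have "T \<subseteq> mfan_spokes a (Suc 0)" unfolding fan_trees_iff mfan_edges_1 by blast
    with T show "T \<in> (\<lambda>s. {s}) ` mfan_spokes a (Suc 0)"
      by (cases rule: fan_trees_Suc_cases) (auto simp: mfan_edges_def Inl_notin_mfan_spokes)
  next
    fix T assume "T \<in> (\<lambda>s. {s}) ` mfan_spokes a (Suc 0)"
    then obtain s where "s \<in> mfan_spokes a (Suc 0)" "T = {s}" by blast
    then show "T \<in> fan_trees a (Suc 0)"
      using fan_trees_insert_pendant_iff[of "{}" a 0 s 0] fan_trees_0 joins_spoke mfan_edges_1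
      by (simp add: mfan_edges_def)
  qed
  then show ?thesis by (simp add: card_image card_mfan_spokes)
qed

lemma card_fan_forests_1: "card (fan_forests a (Suc 0)) = 1"
proof -
  have "fan_forests a (Suc 0) = {{}}"
  proof (intro equalityI subsetI)
    fix F assume F: "F \<in> fan_forests a (Suc 0)"
    then show "F \<in> {{}}"
      using fan_forests_Suc_no_spoke[OF F] mfan_edges_1 unfolding fan_forests_def by auto
  qed (use fan_forests_Suc_iff[of "{}" a 0] fan_trees_0 in auto)
  then show ?thesis by simp
qed

section \<open>Solving the recurrence\<close>

lemma morgan_voyce_B_recurrence_solution:
  fixes t f :: "nat \<Rightarrow> 'a::comm_ring_1"
  assumes "t 1 = x" "f 1 = 1"
    and t_Suc: "\<And>n. 1 \<le> n \<Longrightarrow> t (Suc n) = (x + 1) * t n + x * f n"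
    and f_Suc: "\<And>n. 1 \<le> n \<Longrightarrow> f (Suc n) = t n + f n"
  shows "t (Suc m) = x * morgan_voyce_B m x"
proof -
  have "t (Suc m) = x * morgan_voyce_B m x \<and>
      f (Suc (Suc m)) = morgan_voyce_B (Suc m) x - morgan_voyce_B m x"
  proof (induction m)
    case 0
    then show ?case using assms(1,2) f_Suc[of 1] by simp
  next
    case (Suc m)
    let ?B = "\<lambda>k. morgan_voyce_B k x"
    have t: "t (Suc m) = x * ?B m" and f: "f (Suc (Suc m)) = ?B (Suc m) - ?B m"
      using Suc.IH by blast+
    have "f (Suc m) = f (Suc (Suc m)) - t (Suc m)" using f_Suc[of "Suc m"] by simp
    also have "\<dots> = ?B (Suc m) - ?B m - x * ?B m" using t f by simp
    finally have f': "f (Suc m) = ?B (Suc m) - ?B m - x * ?B m" .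
    have t': "t (Suc (Suc m)) = x * ?B (Suc m)"
      using t_Suc[of "Suc m"] t f' by (simp add: algebra_simps)
    moreover have "f (Suc (Suc (Suc m))) = ?B (Suc (Suc m)) - ?B (Suc m)"
      using f_Suc[of "Suc (Suc m)"] t' f by (simp add: algebra_simps)
    ultimately show ?case by simp
  qed
  then show ?thesis by blast
qed

lemma morgan_voyce_B_1_eq_fib: "morgan_voyce_B m (1::int) = int (fib (2 * m + 2))"
proof (induction m rule: fib.induct)
  case (3 n)
  then show ?case by (simp add: numeral_eq_Suc algebra_simps)
qed (simp_all add: numeral_eq_Suc)

theorem theorem5p9:
  fixes a n :: nat
  assumes "a \<ge> 1" and "n \<ge> 2"
  shows "int (num_spanning_trees (mfan_verts n) (mfan_edges a n) mfan_ends)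
           = int a * morgan_voyce_B (n - 1) (int a)
         \<and> (a = 1 \<longrightarrow>
              num_spanning_trees (mfan_verts n) (mfan_edges a n) mfan_ends = fib (2 * n))"
proof -
  obtain m where n: "n = Suc m" using assms(2) by (cases n) auto
  have "int (card (fan_trees a (Suc m))) = int a * morgan_voyce_B m (int a)"
    by (rule morgan_voyce_B_recurrence_solution[where f = "\<lambda>k. int (card (fan_forests a k))"])
      (simp_all add: card_fan_trees_1 card_fan_forests_1 card_fan_trees_Suc card_fan_forests_Suc
        algebra_simps)
  moreover have "num_spanning_trees (mfan_verts n) (mfan_edges a n) mfan_ends = card (fan_trees a n)"
    unfolding num_spanning_trees_def fan_trees_def ..
  ultimately show ?thesis
    using n morgan_voyce_B_1_eq_fib[of m] by (auto simp: algebra_simps)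
qed

end
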